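(* Let $p>q>1$ be relatively prime integers and let $a\ge1$, $b\ge0$ be integers. If a sequence $\mathbf{x}=x_0x_1\cdots$ is $\frac pq$-automatic, then the sequence $(x_{an+b})_{n\ge0}$ is also $\frac pq$-automatic.
   Context: $A_p=\{0,\ldots,p-1\}$; for $w=w_\ell\cdots w_0\in A_p^*$, $\mathrm{val}_{\frac pq}(w)=\sum_{i=0}^{\ell}\frac{w_i}{q}(\frac pq)^i$; $\mathrm{rep}_{\frac pq}(n)$ is the unique word not starting with $0$ with value $n$ ($\mathrm{rep}_{\frac pq}(0)=\varepsilon$). A sequence $\mathbf{x}$ over a finite alphabet $B$ is $\frac pq$-automatic if there is a deterministic finite automaton with output $(Q,q_0,A_p,\delta,\tau:Q\to B)$ with $x_n=\tau(\delta(q_0,\mathrm{rep}_{\frac pq}(n)))$ for all $n\ge0$. *)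

theory Defs
  imports Complex_Main
begin

(* Words w = w_l ... w_0 are lists whose HEAD is the most significant digit w_l;
   the digit w_i (weight (p/q)^i) is  rev w ! i. *)
definition val_pq :: "nat \<Rightarrow> nat \<Rightarrow> nat list \<Rightarrow> real" where
  "val_pq p q w = (\<Sum>i<length w. real (rev w ! i) / real q * (real p / real q) ^ i)"

definition rep_pq :: "nat \<Rightarrow> nat \<Rightarrow> nat \<Rightarrow> nat list" where
  "rep_pq p q n = (THE w. set w \<subseteq> {..<p} \<and> (w = [] \<or> hd w \<noteq> 0) \<and> val_pq p q w = real n)"

(* DFA with output (Q, q0, A_p, delta, tau); states encoded as natural numbers,
   delta extended to words by reading from the most significant digit (foldl). *)
definition pq_automatic :: "nat \<Rightarrow> nat \<Rightarrow> (nat \<Rightarrow> 'b) \<Rightarrow> bool" where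
  "pq_automatic p q x \<longleftrightarrow>
     (\<exists>(Q :: nat set) q0 (\<delta> :: nat \<Rightarrow> nat \<Rightarrow> nat) (\<tau> :: nat \<Rightarrow> 'b).
        finite Q \<and> q0 \<in> Q \<and> (\<forall>s\<in>Q. \<forall>d<p. \<delta> s d \<in> Q) \<and>
        (\<forall>n. x n = \<tau> (foldl \<delta> q0 (rep_pq p q n))))"

end

theory Submission imports Defs "HOL-Library.FuncSet" begin

(* For 0 < q < p the representation of n > 0 is that of q n div p followed by the digit
   q n mod p, so the state reached on rep(n) obeys s n = \<delta> (s (q n div p)) (q n mod p).
   Since q (a n + c) = p (a (q n div p)) + (a (q n mod p) + q c), the window
   s (a n), ..., s (a n + B) is obtained from the window at a (q n div p) and the digit
   q n mod p alone, provided B \<ge> a (p - 1): then a d + q c < p (B + 1) for d < p, c \<le> B.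
   The windows therefore form a finite automaton computing x (a n + b). *)

lemma val_pq_Nil [simp]: "val_pq p q [] = 0"
  by (simp add: val_pq_def)

lemma val_pq_snoc: "val_pq p q (w @ [d]) = real p / real q * val_pq p q w + real d / real q"
proof -
  have "val_pq p q (w @ [d]) = (\<Sum>i<Suc (length w). real ((d # rev w) ! i) / real q * (real p / real q) ^ i)"
    by (simp add: val_pq_def)
  also have "\<dots> = real d / real q + (\<Sum>i<length w. real (rev w ! i) / real q * (real p / real q) ^ Suc i)"
    by (subst sum.lessThan_Suc_shift) simp
  also have "(\<Sum>i<length w. real (rev w ! i) / real q * (real p / real q) ^ Suc i)
     = real p / real q * val_pq p q w"
    by (simp add: val_pq_def sum_distrib_left mult_ac)
  finally show ?thesis by simp
qed

lemma val_pq_mult_power_nat: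
  assumes "q > 0"
  obtains A :: nat where "val_pq p q w * real q ^ length w = real A"
proof -
  have "\<exists>A::nat. val_pq p q w * real q ^ length w = real A"
  proof (induction w rule: rev_induct)
    case (snoc d w)
    then obtain A where A: "val_pq p q w * real q ^ length w = real A" by blast
    have "val_pq p q (w @ [d]) * real q ^ length (w @ [d])
        = real p * (val_pq p q w * real q ^ length w) + real d * real q ^ length w"
      using assms by (simp add: val_pq_snoc field_simps)
    also have "\<dots> = real (p * A + d * q ^ length w)" using A by simp
    finally show ?case by blast
  qed simp
  then show ?thesis using that by blast
qed

lemma mult_div_less_self:
  fixes p q n :: nat
  assumes "q < p" "n > 0"
  shows "q * n div p < n"
  using assms by (simp add: div_less_iff_less_mult)

function pq_digits :: "nat \<Rightarrow> nat \<Rightarrow> nat \<Rightarrow> nat list" where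
  "pq_digits p q n =
     (if n = 0 \<or> q = 0 \<or> p \<le> q then [] else pq_digits p q (q * n div p) @ [q * n mod p])"
  by auto
termination
  by (relation "measure (\<lambda>(p, q, n). n)") (auto intro: mult_div_less_self)

declare pq_digits.simps [simp del]

lemma pq_digits_0 [simp]: "pq_digits p q 0 = []"
  by (simp add: pq_digits.simps)

lemma pq_digits_step:
  assumes "0 < q" "q < p" "n > 0"
  shows "pq_digits p q n = pq_digits p q (q * n div p) @ [q * n mod p]"
  using assms by (subst pq_digits.simps) auto

lemma pq_digits_less:
  assumes "0 < q" "q < p"
  shows "set (pq_digits p q n) \<subseteq> {..<p}"
proof (induction n rule: less_induct)
  case (less n)
  then show ?case
    using assms mult_div_less_self[OF assms(2)] pq_digits_step[OF assms]
    by (cases "n = 0") auto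
qed

lemma pq_digits_eq_Nil_iff:
  assumes "0 < q" "q < p"
  shows "pq_digits p q n = [] \<longleftrightarrow> n = 0"
  by (cases "n = 0") (simp_all add: pq_digits_step[OF assms])

lemma hd_pq_digits_nonzero:
  assumes "0 < q" "q < p" "n > 0"
  shows "hd (pq_digits p q n) \<noteq> 0"
  using assms(3)
proof (induction n rule: less_induct)
  case (less n)
  show ?case
  proof (cases "q * n div p = 0")
    case True
    then have "q * n mod p = q * n" by (metis div_mult_mod_eq mult_0 add_0)
    then show ?thesis using True less.prems assms pq_digits_step[OF assms(1,2) less.prems] by simp
  next
    case False
    then show ?thesis
      using less.IH[OF mult_div_less_self[OF assms(2) less.prems]] less.prems
        pq_digits_step[OF assms(1,2) less.prems] pq_digits_eq_Nil_iff[OF assms(1,2)]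
      by simp
  qed
qed

lemma val_pq_pq_digits:
  assumes "0 < q" "q < p"
  shows "val_pq p q (pq_digits p q n) = real n"
proof (induction n rule: less_induct)
  case (less n)
  show ?case
  proof (cases "n = 0")
    case False
    have "q * n = p * (q * n div p) + q * n mod p" by simp
    then have "real p * real (q * n div p) + real (q * n mod p) = real q * real n"
      by (metis of_nat_add of_nat_mult)
    then show ?thesis
      using assms False less.IH[OF mult_div_less_self[OF assms(2)]]
      by (simp add: pq_digits_step[OF assms] val_pq_snoc field_simps)
  qed simp
qed

lemma pq_digits_unique:
  assumes "0 < q" "q < p" "coprime p q"
    and "set w \<subseteq> {..<p}" "w = [] \<or> hd w \<noteq> 0" "val_pq p q w = real n"
  shows "w = pq_digits p q n"
  using assms(4-6)
proof (induction w arbitrary: n rule: rev_induct)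
  case (snoc d w)
  obtain A where A: "val_pq p q w * real q ^ length w = real A"
    using val_pq_mult_power_nat assms(1) by blast
  have v: "real p * val_pq p q w + real d = real q * real n"
    using snoc.prems(3) assms by (simp add: val_pq_snoc field_simps)
  have "real (p * A + d * q ^ length w) = (real p * val_pq p q w + real d) * real q ^ length w"
    by (simp add: algebra_simps flip: A)
  also have "\<dots> = real (q * n * q ^ length w)" using v by simp
  finally have "p * A + d * q ^ length w = q * n * q ^ length w" by (simp only: of_nat_eq_iff)
  then have "q ^ length w dvd p * A"
    by (metis dvd_add_left_iff dvd_triv_right dvd_mult_left)
  moreover have "coprime (q ^ length w) p" using assms(3) by (simp add: coprime_commute)
  ultimately obtain N where N: "A = q ^ length w * N"
    using coprime_dvd_mult_right_iff by blast
  \<comment> \<open>coprimality forces the value of the prefix w to be an integer N, so q n = p N + d\<close>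
  have vN: "val_pq p q w = real N" using A N assms(1) by simp
  have w: "w = pq_digits p q N"
    using snoc.IH[OF _ _ vN] snoc.prems(1,2) by (cases w) auto
  have eq: "q * n = p * N + d"
    using v vN by (metis of_nat_add of_nat_mult of_nat_eq_iff)
  have "n > 0"
  proof (rule ccontr)
    assume "\<not> n > 0"
    then have "N = 0" "d = 0" using eq assms(2) by auto
    then show False using snoc.prems(2) w by simp
  qed
  moreover have "q * n div p = N" "q * n mod p = d" using eq snoc.prems(1) by auto
  ultimately show ?case using pq_digits_step[OF assms(1,2)] w by simp
qed simp

lemma rep_pq_eq_pq_digits:
  assumes "0 < q" "q < p" "coprime p q"
  shows "rep_pq p q n = pq_digits p q n"
  unfolding rep_pq_def
proof (rule the_equality)
  show "set (pq_digits p q n) \<subseteq> {..<p} \<and> (pq_digits p q n = [] \<or> hd (pq_digits p q n) \<noteq> 0)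
      \<and> val_pq p q (pq_digits p q n) = real n"
    using pq_digits_less[OF assms(1,2)] hd_pq_digits_nonzero[OF assms(1,2)]
      pq_digits_eq_Nil_iff[OF assms(1,2)] val_pq_pq_digits[OF assms(1,2)]
    by (cases "n = 0") auto
qed (use pq_digits_unique[OF assms] in blast)

lemma foldl_in_closed:
  assumes "\<forall>s\<in>S. \<forall>d<p. \<delta> s d \<in> S" "set w \<subseteq> {..<p}" "s \<in> S"
  shows "foldl \<delta> s w \<in> S"
  using assms(2,3) by (induction w arbitrary: s) (use assms(1) in auto)

lemma foldl_pq_digits_recursive:
  assumes "0 < q" "q < p"
    and rec: "\<And>n. n > 0 \<Longrightarrow> F n = \<delta> (F (q * n div p)) (q * n mod p)"
  shows "foldl \<delta> (F 0) (pq_digits p q n) = F n"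
proof (induction n rule: less_induct)
  case (less n)
  show ?case
  proof (cases "n = 0")
    case False
    then have "foldl \<delta> (F 0) (pq_digits p q n)
        = \<delta> (foldl \<delta> (F 0) (pq_digits p q (q * n div p))) (q * n mod p)"
      by (simp add: pq_digits_step[OF assms(1,2)])
    also have "\<dots> = \<delta> (F (q * n div p)) (q * n mod p)"
      using less.IH[OF mult_div_less_self[OF assms(2)]] False by simp
    also have "\<dots> = F n" using rec False by simp
    finally show ?thesis .
  qed simp
qed

lemma pq_automaticI:
  fixes S :: "'c set" and \<delta> :: "'c \<Rightarrow> nat \<Rightarrow> 'c" and \<tau> :: "'c \<Rightarrow> 'b"
  assumes "finite S" "s0 \<in> S" and closed: "\<forall>s\<in>S. \<forall>d<p. \<delta> s d \<in> S"
    and digits: "\<And>n. set (rep_pq p q n) \<subseteq> {..<p}"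
    and y: "\<And>n. y n = \<tau> (foldl \<delta> s0 (rep_pq p q n))"
  shows "pq_automatic p q y"
proof -
  obtain h where h: "bij_betw h {..<card S} S"
    using ex_bij_betw_nat_finite[OF \<open>finite S\<close>] by (auto simp: atLeast0LessThan)
  define enc where "enc = the_inv_into {..<card S} h"
  have h_enc: "h (enc s) = s" and enc_in: "enc s \<in> {..<card S}" if "s \<in> S" for s
    using that h bij_betw_the_inv_into[OF h] f_the_inv_into_f_bij_betw[OF h]
    by (auto simp: enc_def bij_betw_def)
  define \<delta>' where "\<delta>' i d = enc (\<delta> (h i) d)" for i d
  have foldl_enc: "foldl \<delta>' (enc s) w = enc (foldl \<delta> s w)"
    if "set w \<subseteq> {..<p}" "s \<in> S" for w s
    using that
  proof (induction w arbitrary: s)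
    case (Cons d w)
    then show ?case using closed h_enc by (simp add: \<delta>'_def)
  qed simp
  show ?thesis
    unfolding pq_automatic_def
  proof (intro exI conjI ballI allI impI)
    show "enc s0 \<in> {..<card S}" using enc_in \<open>s0 \<in> S\<close> .
    show "\<delta>' i d \<in> {..<card S}" if "i \<in> {..<card S}" "d < p" for i d
      using that h closed enc_in by (auto simp: \<delta>'_def bij_betw_def)
    show "y n = (\<tau> \<circ> h) (foldl \<delta>' (enc s0) (rep_pq p q n))" for n
      using y foldl_enc[OF digits \<open>s0 \<in> S\<close>] h_enc
        foldl_in_closed[OF closed digits \<open>s0 \<in> S\<close>] by simp
  qed simp
qed

lemma pq_automatic_if_recursive:
  fixes S :: "'c set" and F :: "nat \<Rightarrow> 'c" and \<Delta> :: "'c \<Rightarrow> nat \<Rightarrow> 'c"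
  assumes "0 < q" "q < p" "coprime p q"
    and "finite S" "F 0 \<in> S" "\<forall>s\<in>S. \<forall>d<p. \<Delta> s d \<in> S"
    and "\<And>n. n > 0 \<Longrightarrow> F n = \<Delta> (F (q * n div p)) (q * n mod p)"
  shows "pq_automatic p q (\<lambda>n. \<tau> (F n))"
proof (rule pq_automaticI[where S = S and \<delta> = \<Delta>])
  show "set (rep_pq p q n) \<subseteq> {..<p}" for n
    using pq_digits_less[OF assms(1,2)] by (simp add: rep_pq_eq_pq_digits[OF assms(1-3)])
  show "\<tau> (F n) = \<tau> (foldl \<Delta> (F 0) (rep_pq p q n))" for n
    using foldl_pq_digits_recursive[where F = F and \<delta> = \<Delta>, OF assms(1,2,7)]
    by (simp add: rep_pq_eq_pq_digits[OF assms(1-3)])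
qed (use assms(4-6) in auto)

lemma carry_le:
  fixes a d c p q B :: nat
  assumes "d < p" "c \<le> B" "q < p" "a * (p - 1) \<le> B"
  shows "(a * d + q * c) div p \<le> B"
proof -
  have "a * d \<le> a * (p - 1)" using assms(1) by (intro mult_le_mono2) simp
  moreover have "q * c \<le> q * B" using assms(2) by simp
  ultimately have "a * d + q * c \<le> B + q * B" using assms(4) by linarith
  also have "\<dots> \<le> p * B" using assms(3) by (metis Suc_leI mult_Suc mult_le_mono1 add.commute)
  finally have "(a * d + q * c) div p \<le> p * B div p" by (rule div_le_mono)
  then show ?thesis using assms(3) by simp
qed

lemma window_recursive:
  fixes s :: "nat \<Rightarrow> 'c" and a p q B :: nat
  assumes "a \<ge> 1" "a * (p - 1) \<le> B" "q < p"
    and rec: "\<And>n. n > 0 \<Longrightarrow> s n = \<delta> (s (q * n div p)) (q * n mod p)"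
    and "n > 0" and "d = q * n mod p"
  defines "W \<equiv> \<lambda>n. \<lambda>c\<in>{..B}. s (a * n + c)"
  shows "W n = (\<lambda>c\<in>{..B}. \<delta> (W (q * n div p) ((a * d + q * c) div p)) ((a * d + q * c) mod p))"
  unfolding W_def
proof (rule restrict_ext)
  fix c assume "c \<in> {..B}"
  define N where "N = q * n div p"
  have "q * n = p * N + d" by (simp add: N_def assms(6))
  then have split: "q * (a * n + c) = (a * d + q * c) + a * N * p"
    by (simp add: algebra_simps)
  have "s (a * n + c) = \<delta> (s (q * (a * n + c) div p)) (q * (a * n + c) mod p)"
    using assms(1,5) by (intro rec) simp
  also have "\<dots> = \<delta> (s (a * N + (a * d + q * c) div p)) ((a * d + q * c) mod p)"
    unfolding split using assms(3) by simp
  finally show "s (a * n + c)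
      = \<delta> ((\<lambda>c\<in>{..B}. s (a * (q * n div p) + c)) ((a * d + q * c) div p)) ((a * d + q * c) mod p)"
    using carry_le[OF _ _ assms(3,2), of d c] \<open>c \<in> {..B}\<close> assms(3,6) N_def by simp
qed

theorem mainTheorem15:
  fixes p q a b :: nat and x :: "nat \<Rightarrow> 'b"
  assumes "q > 1" and "p > q" and "coprime p q"
    and "a \<ge> 1"
    and "finite (range x)"
    and "pq_automatic p q x"
  shows "pq_automatic p q (\<lambda>n. x (a * n + b))"
proof -
  have q: "0 < q" "q < p" using assms(1,2) by auto
  obtain Q :: "nat set" and s0 \<delta> \<tau> where "finite Q" "s0 \<in> Q" and closed: "\<forall>s\<in>Q. \<forall>d<p. \<delta> s d \<in> Q"
    and x: "\<And>n. x n = \<tau> (foldl \<delta> s0 (rep_pq p q n))"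
    using assms(6) unfolding pq_automatic_def by blast
  define s where "s n = foldl \<delta> s0 (pq_digits p q n)" for n
  have s_in: "s n \<in> Q" for n
    unfolding s_def using foldl_in_closed[OF closed pq_digits_less[OF q] \<open>s0 \<in> Q\<close>] .
  have s_rec: "s n = \<delta> (s (q * n div p)) (q * n mod p)" if "n > 0" for n
    unfolding s_def using pq_digits_step[OF q that] by simp
  define B where "B = max b (a * (p - 1))"
  define W where "W n = (\<lambda>c\<in>{..B}. s (a * n + c))" for n
  define \<Delta> where "\<Delta> f d = (\<lambda>c\<in>{..B}. \<delta> (f ((a * d + q * c) div p)) ((a * d + q * c) mod p))" for f d
  have "pq_automatic p q (\<lambda>n. \<tau> (W n b))"
  proof (rule pq_automatic_if_recursive[OF q assms(3), where S = "PiE {..B} (\<lambda>_. Q)"])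
    show "finite (PiE {..B} (\<lambda>_. Q))" using \<open>finite Q\<close> by (simp add: finite_PiE)
    show "W 0 \<in> PiE {..B} (\<lambda>_. Q)" using s_in by (simp add: W_def)
    show "\<forall>f\<in>PiE {..B} (\<lambda>_. Q). \<forall>d<p. \<Delta> f d \<in> PiE {..B} (\<lambda>_. Q)"
      using closed carry_le[OF _ _ q(2)] by (auto simp: \<Delta>_def B_def PiE_iff)
    show "W n = \<Delta> (W (q * n div p)) (q * n mod p)" if "n > 0" for n
      using window_recursive[where s = s and \<delta> = \<delta> and B = B, OF assms(4) _ q(2) s_rec that refl]
      by (simp add: B_def W_def \<Delta>_def)
  qed
  moreover have "\<tau> (W n b) = x (a * n + b)" for n
    by (simp add: W_def B_def s_def x rep_pq_eq_pq_digits[OF q assms(3)])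
  ultimately show ?thesis by simp
qed

end
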